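(* Let $P$ be a finite $(3+1)$-free poset with clone sets $C_1,\dots,C_r$ and tangles $T_1,\dots,T_s$ (the parts of $P$, which partition $P$). For each part $X$, regard $\mathrm{Aut}(X)$, the automorphism group of the induced subposet on $X$, as a group of permutations of $P$ acting as the identity on $P\setminus X$. Then each such permutation is an automorphism of $P$, and \[\mathrm{Aut}(P)=\prod_{i=1}^r\mathrm{Aut}(C_i)\times\prod_{j=1}^s\mathrm{Aut}(T_j),\] i.e. the natural map from this direct product to $\mathrm{Aut}(P)$ is a group isomorphism.
   Context: A poset $P$ is $(3+1)$-free if there are no $a,b,c,d\in P$ with $a<b<c$ and $d$ incomparable to each of $a,b,c$. For $a\in P$ let $D_a=\{x\in P:x<a\}$, $U_a=\{x\in P:x>a\}$. Write $a\mathrel{\top}b$ if neither of $D_a,D_b$ contains the other, $a\mathrel{\bot}b$ if neither of $U_a,U_b$ contains the other, and $a\approx b$ if $D_a=D_b$ and $U_a=U_b$. A top of a tangle is a subset $A\subseteq P$ with $|A|\ge2$ that is a connected component of the graph on $P$ with edges $\{a,b\}$ for $a\mathrel{\top}b$; a bottom of a tangle is defined in the same way using $\bot$. A top $A$ and bottom $B$ are matched if there are distinct $a_1,a_2\in A$, $b_1,b_2\in B$ with $b_1<a_1$, $b_2<a_2$ and the pairs $\{a_1,a_2\},\{b_1,b_2\},\{b_1,a_2\},\{b_2,a_1\}$ incomparable; in a $(3+1)$-free poset this is a perfect matching between tops and bottoms of tangles. A tangle is a matched pair $(A,B)$, identified with the set $A\cup B$ and its induced subposet. A clone set is an equivalence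 class of $\approx$ restricted to $P\setminus\bigcup_j (A_j\cup B_j)$, where $(A_j,B_j)$ range over the tangles. Clone sets and tangles are called the parts of $P$. *)

theory Defs
  imports Main "HOL-Library.FuncSet"
begin

definition strict_poset :: "'a set \<Rightarrow> ('a \<Rightarrow> 'a \<Rightarrow> bool) \<Rightarrow> bool" where
  "strict_poset P lt \<longleftrightarrow>
     (\<forall>x\<in>P. \<not> lt x x) \<and>
     (\<forall>x\<in>P. \<forall>y\<in>P. \<forall>z\<in>P. lt x y \<longrightarrow> lt y z \<longrightarrow> lt x z)"

definition incomp :: "('a \<Rightarrow> 'a \<Rightarrow> bool) \<Rightarrow> 'a \<Rightarrow> 'a \<Rightarrow> bool" where
  "incomp lt x y \<longleftrightarrow> x \<noteq> y \<and> \<not> lt x y \<and> \<not> lt y x"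

definition free_3_1 :: "'a set \<Rightarrow> ('a \<Rightarrow> 'a \<Rightarrow> bool) \<Rightarrow> bool" where
  "free_3_1 P lt \<longleftrightarrow>
     \<not> (\<exists>a\<in>P. \<exists>b\<in>P. \<exists>c\<in>P. \<exists>d\<in>P. lt a b \<and> lt b c \<and>
          incomp lt d a \<and> incomp lt d b \<and> incomp lt d c)"

definition down :: "'a set \<Rightarrow> ('a \<Rightarrow> 'a \<Rightarrow> bool) \<Rightarrow> 'a \<Rightarrow> 'a set" where
  "down P lt a = {x\<in>P. lt x a}"

definition up :: "'a set \<Rightarrow> ('a \<Rightarrow> 'a \<Rightarrow> bool) \<Rightarrow> 'a \<Rightarrow> 'a set" where
  "up P lt a = {x\<in>P. lt a x}"

definition top_rel :: "'a set \<Rightarrow> ('a \<Rightarrow> 'a \<Rightarrow> bool) \<Rightarrow> 'a \<Rightarrow> 'a \<Rightarrow> bool" where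
  "top_rel P lt a b \<longleftrightarrow> a \<in> P \<and> b \<in> P \<and>
     \<not> down P lt a \<subseteq> down P lt b \<and> \<not> down P lt b \<subseteq> down P lt a"

definition bot_rel :: "'a set \<Rightarrow> ('a \<Rightarrow> 'a \<Rightarrow> bool) \<Rightarrow> 'a \<Rightarrow> 'a \<Rightarrow> bool" where
  "bot_rel P lt a b \<longleftrightarrow> a \<in> P \<and> b \<in> P \<and>
     \<not> up P lt a \<subseteq> up P lt b \<and> \<not> up P lt b \<subseteq> up P lt a"

definition component :: "'a set \<Rightarrow> ('a \<Rightarrow> 'a \<Rightarrow> bool) \<Rightarrow> 'a \<Rightarrow> 'a set" where
  "component P E a = {b\<in>P. (\<lambda>x y. E x y \<or> E y x)\<^sup>*\<^sup>* a b}"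

definition tops :: "'a set \<Rightarrow> ('a \<Rightarrow> 'a \<Rightarrow> bool) \<Rightarrow> 'a set set" where
  "tops P lt = {component P (top_rel P lt) a | a. a \<in> P \<and> card (component P (top_rel P lt) a) \<ge> 2}"

definition bottoms :: "'a set \<Rightarrow> ('a \<Rightarrow> 'a \<Rightarrow> bool) \<Rightarrow> 'a set set" where
  "bottoms P lt = {component P (bot_rel P lt) a | a. a \<in> P \<and> card (component P (bot_rel P lt) a) \<ge> 2}"

definition matched :: "('a \<Rightarrow> 'a \<Rightarrow> bool) \<Rightarrow> 'a set \<Rightarrow> 'a set \<Rightarrow> bool" where
  "matched lt A B \<longleftrightarrow>
     (\<exists>a1\<in>A. \<exists>a2\<in>A. \<exists>b1\<in>B. \<exists>b2\<in>B. a1 \<noteq> a2 \<and> b1 \<noteq> b2 \<and>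
        lt b1 a1 \<and> lt b2 a2 \<and> incomp lt a1 a2 \<and> incomp lt b1 b2 \<and>
        incomp lt b1 a2 \<and> incomp lt b2 a1)"

text \<open>Tangles, identified with the sets A \<union> B.\<close>

definition tangles :: "'a set \<Rightarrow> ('a \<Rightarrow> 'a \<Rightarrow> bool) \<Rightarrow> 'a set set" where
  "tangles P lt = {A \<union> B | A B. A \<in> tops P lt \<and> B \<in> bottoms P lt \<and> matched lt A B}"

definition clone_sets :: "'a set \<Rightarrow> ('a \<Rightarrow> 'a \<Rightarrow> bool) \<Rightarrow> 'a set set" where
  "clone_sets P lt =
     (let R = P - \<Union>(tangles P lt) in
      {{y\<in>R. down P lt y = down P lt x \<and> up P lt y = up P lt x} | x. x \<in> R})"

definition parts :: "'a set \<Rightarrow> ('a \<Rightarrow> 'a \<Rightarrow> bool) \<Rightarrow> 'a set set" where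
  "parts P lt = clone_sets P lt \<union> tangles P lt"

definition aut :: "('a \<Rightarrow> 'a \<Rightarrow> bool) \<Rightarrow> 'a set \<Rightarrow> ('a \<Rightarrow> 'a) set" where
  "aut lt X = {f. bij_betw f X X \<and> (\<forall>x\<in>X. \<forall>y\<in>X. lt (f x) (f y) \<longleftrightarrow> lt x y) \<and>
                  (\<forall>x. x \<notin> X \<longrightarrow> f x = x)}"

text \<open>The natural map from the direct product of the Aut(X), X a part, to
  permutations of P: the product of the commuting, disjointly supported
  permutations g X, i.e. on each part X it acts as g X.\<close>

definition prod_map :: "'a set set \<Rightarrow> ('a set \<Rightarrow> 'a \<Rightarrow> 'a) \<Rightarrow> 'a \<Rightarrow> 'a" where
  "prod_map Q g = (\<lambda>x. if \<exists>X\<in>Q. x \<in> X then g (THE X. X \<in> Q \<and> x \<in> X) x else x)"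

end

theory Submission
  imports Defs
begin

text \<open>In a (3+1)-free poset, a \<top> b holds exactly when a and b are the tops of an induced
  2+2, and dually for \<bottom>. Walking along \<top>-edges moves the bottoms of these 2+2's
  along \<bottom>-edges, which is why tops and bottoms of tangles are matched; and
  (3+1)-freeness forbids an element to be the top of one 2+2 and the bottom of another, so
  tops and bottoms are disjoint. Again by (3+1)-freeness, all elements of a top A have the
  same up-set and the elements of the matched bottom B have the same up-set outside A
  (dually for down-sets). Hence an automorphism of the tangle A \<union> B extends by the identity
  to P, once one knows that it preserves A and B, which holds because it maps 2+2's to 2+2's.
  Conversely, for an automorphism f of P the down-set of f x is the image of that of x, so
  it has the same size and either equals it or x \<top> f x; thus f preserves every top and
  bottom and, since it cannot create \<top>- or \<bottom>-neighbours, every clone set. So an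
  automorphism of P is the product of its restrictions to the parts.\<close>

definition two_plus_two :: "'a set \<Rightarrow> ('a \<Rightarrow> 'a \<Rightarrow> bool) \<Rightarrow> 'a \<Rightarrow> 'a \<Rightarrow> 'a \<Rightarrow> 'a \<Rightarrow> bool" where
  "two_plus_two P lt u v a b \<longleftrightarrow> u \<in> P \<and> v \<in> P \<and> a \<in> P \<and> b \<in> P \<and> lt u a \<and> lt v b \<and>
     incomp lt a b \<and> incomp lt u v \<and> incomp lt u b \<and> incomp lt v a"

lemma two_plus_two_commute: "two_plus_two P lt u v a b \<longleftrightarrow> two_plus_two P lt v u b a"
  unfolding two_plus_two_def incomp_def by auto

lemma two_plus_two_in_P:
  "two_plus_two P lt u v a b \<Longrightarrow> u \<in> P \<and> v \<in> P \<and> a \<in> P \<and> b \<in> P"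
  unfolding two_plus_two_def by blast

lemma matched_iff_two_plus_two:
  assumes "A \<subseteq> P" "B \<subseteq> P"
  shows "matched lt A B \<longleftrightarrow> (\<exists>a1\<in>A. \<exists>a2\<in>A. \<exists>b1\<in>B. \<exists>b2\<in>B. two_plus_two P lt b1 b2 a1 a2)"
  using assms unfolding matched_def two_plus_two_def incomp_def by blast

lemma mem_up_down_iff:
  "y \<in> up P lt x \<longleftrightarrow> y \<in> P \<and> lt x y" "y \<in> down P lt x \<longleftrightarrow> y \<in> P \<and> lt y x"
  unfolding up_def down_def by simp_all

lemma top_relI:
  "\<lbrakk>x \<in> P; y \<in> P; p \<in> P; q \<in> P; lt p x; \<not> lt p y; lt q y; \<not> lt q x\<rbrakk> \<Longrightarrow> top_rel P lt x y"
  unfolding top_rel_def down_def by blast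

lemma bot_relI:
  "\<lbrakk>x \<in> P; y \<in> P; p \<in> P; q \<in> P; lt x p; \<not> lt y p; lt y q; \<not> lt x q\<rbrakk> \<Longrightarrow> bot_rel P lt x y"
  unfolding bot_rel_def up_def by blast

lemma top_rel_cong_down:
  "\<lbrakk>down P lt x = down P lt y; x \<in> P; y \<in> P\<rbrakk> \<Longrightarrow> top_rel P lt x c \<longleftrightarrow> top_rel P lt y c"
  unfolding top_rel_def by simp

lemma bot_rel_cong_up:
  "\<lbrakk>up P lt x = up P lt y; x \<in> P; y \<in> P\<rbrakk> \<Longrightarrow> bot_rel P lt x c \<longleftrightarrow> bot_rel P lt y c"
  unfolding bot_rel_def by simp

section \<open>Duality\<close>

lemma incomp_conversep [simp]: "incomp lt\<inverse>\<inverse> = incomp lt"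
  unfolding incomp_def by auto

lemma down_conversep [simp]: "down P lt\<inverse>\<inverse> = up P lt"
  unfolding down_def up_def by auto

lemma up_conversep [simp]: "up P lt\<inverse>\<inverse> = down P lt"
  unfolding down_def up_def by auto

lemma top_rel_conversep [simp]: "top_rel P lt\<inverse>\<inverse> = bot_rel P lt"
  unfolding top_rel_def bot_rel_def by simp

lemma bot_rel_conversep [simp]: "bot_rel P lt\<inverse>\<inverse> = top_rel P lt"
  unfolding top_rel_def bot_rel_def by simp

lemma tops_conversep [simp]: "tops P lt\<inverse>\<inverse> = bottoms P lt"
  unfolding tops_def bottoms_def by simp

lemma bottoms_conversep [simp]: "bottoms P lt\<inverse>\<inverse> = tops P lt"
  unfolding tops_def bottoms_def by simp

lemma matched_conversep: "matched lt\<inverse>\<inverse> B A \<longleftrightarrow> matched lt A B"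
  unfolding matched_def incomp_def by auto

lemma aut_conversep [simp]: "aut lt\<inverse>\<inverse> X = aut lt X"
  unfolding aut_def by auto

lemma two_plus_two_conversep: "two_plus_two P lt\<inverse>\<inverse> a b u v \<longleftrightarrow> two_plus_two P lt u v a b"
  unfolding two_plus_two_def incomp_def by auto

section \<open>Components of a symmetric graph\<close>

definition nontrivial_components :: "'a set \<Rightarrow> ('a \<Rightarrow> 'a \<Rightarrow> bool) \<Rightarrow> 'a set set" where
  "nontrivial_components P E =
     {component P E a | a. a \<in> P \<and> card (component P E a) \<ge> 2}"

lemma tops_eq: "tops P lt = nontrivial_components P (top_rel P lt)"
  unfolding tops_def nontrivial_components_def ..

lemma bottoms_eq: "bottoms P lt = nontrivial_components P (bot_rel P lt)"
  unfolding bottoms_def nontrivial_components_def ..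

context
  fixes P :: "'a set" and E :: "'a \<Rightarrow> 'a \<Rightarrow> bool"
  assumes symp: "symp E"
begin

lemma component_symp: "component P E a = {b \<in> P. E\<^sup>*\<^sup>* a b}"
proof -
  have "(\<lambda>x y. E x y \<or> E y x) = E"
    using symp_symclp_eq[OF symp] by (simp add: symclp_def fun_eq_iff)
  then show ?thesis unfolding component_def by simp
qed

lemma nontrivial_componentE:
  assumes "C \<in> nontrivial_components P E"
  obtains a where "a \<in> P" "C = {b \<in> P. E\<^sup>*\<^sup>* a b}" "card C \<ge> 2"
  using assms unfolding nontrivial_components_def component_symp by blast

lemma nontrivial_component_subset: "C \<in> nontrivial_components P E \<Longrightarrow> C \<subseteq> P"
  by (erule nontrivial_componentE) blast

lemma nontrivial_component_connected:
  assumes "C \<in> nontrivial_components P E" "x \<in> C" "y \<in> C"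
  shows "E\<^sup>*\<^sup>* x y"
proof -
  obtain a where "C = {b \<in> P. E\<^sup>*\<^sup>* a b}" using assms(1) by (rule nontrivial_componentE)
  then have "E\<^sup>*\<^sup>* x a" "E\<^sup>*\<^sup>* a y"
    using assms(2,3) symp_rtranclp[OF symp] by (auto dest: sympD)
  then show ?thesis by (rule rtranclp_trans)
qed

lemma nontrivial_component_closed:
  assumes "C \<in> nontrivial_components P E" "x \<in> C" "E\<^sup>*\<^sup>* x y" "y \<in> P"
  shows "y \<in> C"
proof -
  obtain a where "C = {b \<in> P. E\<^sup>*\<^sup>* a b}" using assms(1) by (rule nontrivial_componentE)
  then show ?thesis using assms(2-4) by (auto intro: rtranclp_trans)
qed

lemma nontrivial_component_has_edge:
  assumes "C \<in> nontrivial_components P E" "x \<in> C"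
  shows "\<exists>y. E x y"
proof -
  have "\<not> C \<subseteq> {x}"
    using nontrivial_componentE[OF assms(1)] card_mono[of "{x}" C] by fastforce
  then obtain y where "y \<in> C" "y \<noteq> x" by blast
  with nontrivial_component_connected[OF assms(1,2)] show ?thesis
    by (metis converse_rtranclpE)
qed

lemma nontrivial_components_eq:
  assumes "C \<in> nontrivial_components P E" "C' \<in> nontrivial_components P E" "x \<in> C" "x \<in> C'"
  shows "C = C'"
  using assms nontrivial_component_connected nontrivial_component_closed
    nontrivial_component_subset by (metis subsetI subset_antisym subsetD)

lemma nontrivial_componentI:
  assumes "finite P" "x \<in> P" "y \<in> P" "x \<noteq> y" "E x y"
  shows "component P E x \<in> nontrivial_components P E"
    and "x \<in> component P E x" "y \<in> component P E x"
proof -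
  show x: "x \<in> component P E x" and y: "y \<in> component P E x"
    using assms(2,3,5) unfolding component_symp by auto
  have "card {x, y} \<le> card (component P E x)"
    using x y assms(1) by (intro card_mono) (auto simp: component_symp)
  then show "component P E x \<in> nontrivial_components P E"
    using assms(2,4) unfolding nontrivial_components_def by force
qed

end

lemma symp_top_rel: "symp (top_rel P lt)"
  unfolding top_rel_def by (auto intro: sympI)

lemma symp_bot_rel: "symp (bot_rel P lt)"
  unfolding bot_rel_def by (auto intro: sympI)

lemmas top_subset =
  nontrivial_component_subset[where P = P and E = "top_rel P lt" for P lt, OF symp_top_rel, folded tops_eq]
lemmas top_connected =
  nontrivial_component_connected[where P = P and E = "top_rel P lt" for P lt, OF symp_top_rel, folded tops_eq]
lemmas top_closed =
  nontrivial_component_closed[where P = P and E = "top_rel P lt" for P lt, OF symp_top_rel, folded tops_eq]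
lemmas top_has_edge =
  nontrivial_component_has_edge[where P = P and E = "top_rel P lt" for P lt, OF symp_top_rel, folded tops_eq]
lemmas tops_eq_if_meet =
  nontrivial_components_eq[where P = P and E = "top_rel P lt" for P lt, OF symp_top_rel, folded tops_eq]

lemmas bottom_subset =
  nontrivial_component_subset[where P = P and E = "bot_rel P lt" for P lt, OF symp_bot_rel, folded bottoms_eq]
lemmas bottom_connected =
  nontrivial_component_connected[where P = P and E = "bot_rel P lt" for P lt, OF symp_bot_rel, folded bottoms_eq]
lemmas bottom_closed =
  nontrivial_component_closed[where P = P and E = "bot_rel P lt" for P lt, OF symp_bot_rel, folded bottoms_eq]
lemmas bottom_has_edge =
  nontrivial_component_has_edge[where P = P and E = "bot_rel P lt" for P lt, OF symp_bot_rel, folded bottoms_eq]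
lemmas bottoms_eq_if_meet =
  nontrivial_components_eq[where P = P and E = "bot_rel P lt" for P lt, OF symp_bot_rel, folded bottoms_eq]

lemma top_closed_edge: "A \<in> tops P lt \<Longrightarrow> x \<in> A \<Longrightarrow> top_rel P lt x y \<Longrightarrow> y \<in> A"
  using top_closed[of A P lt x y] unfolding top_rel_def by blast

lemma bottom_closed_edge: "B \<in> bottoms P lt \<Longrightarrow> x \<in> B \<Longrightarrow> bot_rel P lt x y \<Longrightarrow> y \<in> B"
  using bottom_closed[of B P lt x y] unfolding bot_rel_def by blast

section \<open>Automorphisms of induced subposets\<close>

lemma aut_fixes: "g \<in> aut lt X \<Longrightarrow> x \<notin> X \<Longrightarrow> g x = x"
  unfolding aut_def by simp

lemma aut_less_iff: "g \<in> aut lt X \<Longrightarrow> x \<in> X \<Longrightarrow> y \<in> X \<Longrightarrow> lt (g x) (g y) \<longleftrightarrow> lt x y"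
  unfolding aut_def by simp

lemma aut_bij_betw: "g \<in> aut lt X \<Longrightarrow> bij_betw g X X"
  unfolding aut_def by simp

lemma aut_in: "g \<in> aut lt X \<Longrightarrow> x \<in> X \<Longrightarrow> g x \<in> X"
  unfolding aut_def bij_betw_def by blast

lemma aut_two_plus_two:
  assumes g: "g \<in> aut lt T" and "T \<subseteq> P" "two_plus_two P lt u v a b" "u \<in> T" "v \<in> T" "a \<in> T" "b \<in> T"
  shows "two_plus_two P lt (g u) (g v) (g a) (g b)"
proof -
  have "g x = g y \<longleftrightarrow> x = y" if "x \<in> T" "y \<in> T" for x y
    using aut_bij_betw[OF g] that unfolding bij_betw_def inj_on_def by blast
  then have "incomp lt (g x) (g y) \<longleftrightarrow> incomp lt x y" if "x \<in> T" "y \<in> T" for x y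
    using aut_less_iff[OF g] that unfolding incomp_def by simp
  then show ?thesis
    using assms(2-7) aut_in[OF g] aut_less_iff[OF g] unfolding two_plus_two_def by auto
qed

lemma aut_image_down:
  assumes f: "f \<in> aut lt P" and x: "x \<in> P"
  shows "down P lt (f x) = f ` down P lt x"
proof (intro equalityI subsetI)
  fix y assume y: "y \<in> down P lt (f x)"
  have "f ` P = P" using aut_bij_betw[OF f] by (simp add: bij_betw_def)
  then obtain y0 where y0: "y0 \<in> P" "y = f y0"
    using y unfolding down_def by (metis (lifting) imageE mem_Collect_eq)
  then have "lt y0 x" using y aut_less_iff[OF f y0(1) x] unfolding down_def by simp
  then show "y \<in> f ` down P lt x" using y0 unfolding down_def by blast
next
  fix y assume "y \<in> f ` down P lt x"
  then obtain y0 where y0: "y0 \<in> P" "lt y0 x" "y = f y0" unfolding down_def by blast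
  then have "lt y (f x)" using aut_less_iff[OF f y0(1) x] by simp
  then show "y \<in> down P lt (f x)" using y0 aut_in[OF f] unfolding down_def by simp
qed

lemma aut_extends:
  assumes "X \<subseteq> P" and g: "g \<in> aut lt X"
    and up: "\<And>x. x \<in> X \<Longrightarrow> up P lt (g x) - X = up P lt x - X"
    and down: "\<And>x. x \<in> X \<Longrightarrow> down P lt (g x) - X = down P lt x - X"
  shows "g \<in> aut lt P"
proof -
  have "bij_betw g (P - X) (P - X) \<longleftrightarrow> bij_betw id (P - X) (P - X)"
    by (rule bij_betw_cong) (simp add: aut_fixes[OF g])
  then have "bij_betw g (X \<union> (P - X)) (X \<union> (P - X))"
    by (intro bij_betw_combine[OF aut_bij_betw[OF g]]) auto
  moreover have "X \<union> (P - X) = P" using \<open>X \<subseteq> P\<close> by blast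
  ultimately have "bij_betw g P P" by simp
  moreover have "lt (g x) (g y) \<longleftrightarrow> lt x y" if "x \<in> P" "y \<in> P" for x y
  proof (cases "x \<in> X"; cases "y \<in> X")
    assume "x \<in> X" "y \<notin> X"
    then have "lt (g x) (g y) \<longleftrightarrow> y \<in> up P lt (g x) - X"
      using that aut_fixes[OF g] by (simp add: mem_up_down_iff)
    also have "\<dots> \<longleftrightarrow> lt x y" using up[OF \<open>x \<in> X\<close>] \<open>y \<notin> X\<close> that by (simp add: mem_up_down_iff)
    finally show ?thesis .
  next
    assume "x \<notin> X" "y \<in> X"
    then have "lt (g x) (g y) \<longleftrightarrow> x \<in> down P lt (g y) - X"
      using that aut_fixes[OF g] by (simp add: mem_up_down_iff)
    also have "\<dots> \<longleftrightarrow> lt x y" using down[OF \<open>y \<in> X\<close>] \<open>x \<notin> X\<close> that by (simp add: mem_up_down_iff)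
    finally show ?thesis .
  qed (simp_all add: aut_less_iff[OF g] aut_fixes[OF g])
  ultimately show ?thesis using aut_fixes[OF g] \<open>X \<subseteq> P\<close> unfolding aut_def by blast
qed

lemma aut_restrict:
  assumes f: "f \<in> aut lt P" and "X \<subseteq> P" "f ` X = X"
  shows "(\<lambda>x. if x \<in> X then f x else x) \<in> aut lt X"
proof -
  have "bij_betw f X X"
    using assms aut_bij_betw[OF f] by (auto simp: bij_betw_def intro: inj_on_subset)
  then have "bij_betw (\<lambda>x. if x \<in> X then f x else x) X X"
    by (rule bij_betw_cong[THEN iffD2, rotated]) simp
  then show ?thesis using aut_less_iff[OF f] \<open>X \<subseteq> P\<close> unfolding aut_def by auto
qed

section \<open>Products of automorphisms of the blocks of a partition\<close>

context
  fixes Q :: "'a set set"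
  assumes disjoint: "\<forall>X\<in>Q. \<forall>Y\<in>Q. X \<noteq> Y \<longrightarrow> X \<inter> Y = {}"
begin

lemma prod_map_in:
  assumes "X \<in> Q" "x \<in> X"
  shows "prod_map Q g x = g X x"
proof -
  have "(THE Y. Y \<in> Q \<and> x \<in> Y) = X"
    by (rule the_equality) (use assms disjoint in blast)+
  then show ?thesis unfolding prod_map_def using assms by auto
qed

lemma prod_map_outside: "x \<notin> \<Union>Q \<Longrightarrow> prod_map Q g x = x"
  unfolding prod_map_def by auto

lemma prod_map_comp:
  assumes "g \<in> Pi\<^sub>E Q (aut lt)" "h \<in> Pi\<^sub>E Q (aut lt)"
  shows "prod_map Q (\<lambda>X\<in>Q. g X \<circ> h X) = prod_map Q g \<circ> prod_map Q h"
proof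
  fix x
  show "prod_map Q (\<lambda>X\<in>Q. g X \<circ> h X) x = (prod_map Q g \<circ> prod_map Q h) x"
  proof (cases "x \<in> \<Union>Q")
    case True
    then obtain X where X: "X \<in> Q" "x \<in> X" by blast
    then have "h X x \<in> X" using assms(2) aut_in by fastforce
    then show ?thesis using X by (simp add: prod_map_in)
  qed (simp add: prod_map_outside)
qed

lemma bij_betw_blocks:
  assumes "\<forall>X\<in>Q. bij_betw F X X"
  shows "bij_betw F (\<Union>Q) (\<Union>Q)"
proof -
  have "inj_on F (\<Union>Q)"
  proof (rule inj_onI)
    fix x y assume "x \<in> \<Union>Q" "y \<in> \<Union>Q" and eq: "F x = F y"
    then obtain X Y where XY: "X \<in> Q" "Y \<in> Q" "x \<in> X" "y \<in> Y" by blast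
    have "F x \<in> X" "F y \<in> Y" using assms XY by (meson bij_betw_apply)+
    then have "X = Y" using disjoint XY(1,2) eq by (metis disjoint_iff)
    then show "x = y" using assms XY eq by (metis bij_betw_imp_inj_on inj_onD)
  qed
  moreover have "F ` \<Union>Q = \<Union>Q"
  proof -
    have "F ` \<Union>Q = (\<Union>X\<in>Q. F ` X)" by blast
    also have "\<dots> = \<Union>Q" using assms by (simp add: bij_betw_def)
    finally show ?thesis .
  qed
  ultimately show ?thesis unfolding bij_betw_def ..
qed

context
  fixes P :: "'a set" and lt :: "'a \<Rightarrow> 'a \<Rightarrow> bool"
  assumes cover: "\<Union>Q = P"
    and extends: "\<forall>X\<in>Q. aut lt X \<subseteq> aut lt P"
    and invariant: "\<forall>f\<in>aut lt P. \<forall>X\<in>Q. f ` X \<subseteq> X"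
begin

lemma prod_map_aut:
  assumes g: "g \<in> Pi\<^sub>E Q (aut lt)"
  shows "prod_map Q g \<in> aut lt P"
proof -
  let ?F = "prod_map Q g"
  have gX: "g X \<in> aut lt X" "g X \<in> aut lt P" if "X \<in> Q" for X
    using g extends that by auto
  have "bij_betw ?F X X" if "X \<in> Q" for X
    using aut_bij_betw[OF gX(1)[OF that]] bij_betw_cong[of X ?F "g X"] prod_map_in that by simp
  then have "bij_betw ?F P P" using bij_betw_blocks cover by blast
  moreover have "lt (?F x) (?F y) \<longleftrightarrow> lt x y" if "x \<in> X" "y \<in> Y" "X \<in> Q" "Y \<in> Q" for x y X Y
  proof (cases "X = Y")
    case True
    then show ?thesis using that aut_less_iff[OF gX(1)] by (simp add: prod_map_in)
  next
    case False
    have "g Y y \<in> Y" "x \<notin> Y" using that False disjoint aut_in[OF gX(1)] by blast+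
    then have "g Y y \<notin> X" "g Y y \<in> P" using that False disjoint cover by blast+
    have "lt (g X x) (g Y y) \<longleftrightarrow> lt (g X x) (g X (g Y y))"
      using aut_fixes[OF gX(1)] \<open>g Y y \<notin> X\<close> that by simp
    also have "\<dots> \<longleftrightarrow> lt x (g Y y)"
      using aut_less_iff[OF gX(2)] \<open>g Y y \<in> P\<close> that cover by blast
    also have "\<dots> \<longleftrightarrow> lt (g Y x) (g Y y)" using aut_fixes[OF gX(1)] \<open>x \<notin> Y\<close> that by simp
    also have "\<dots> \<longleftrightarrow> lt x y" using aut_less_iff[OF gX(2)] that cover by blast
    finally show ?thesis using that by (simp add: prod_map_in)
  qed
  ultimately show ?thesis
    using cover prod_map_outside unfolding aut_def by blast
qed

lemma aut_eq_prod_map_restrict: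
  assumes f: "f \<in> aut lt P"
  shows "(\<lambda>X\<in>Q. \<lambda>x. if x \<in> X then f x else x) \<in> Pi\<^sub>E Q (aut lt)"
    and "prod_map Q (\<lambda>X\<in>Q. \<lambda>x. if x \<in> X then f x else x) = f"
proof -
  have XP: "X \<subseteq> P" if "X \<in> Q" for X using cover that by blast
  have fX: "f ` X = X" if X: "X \<in> Q" for X
  proof
    show "f ` X \<subseteq> X" using invariant f X by blast
    show "X \<subseteq> f ` X"
    proof
      fix y assume "y \<in> X"
      then obtain x where x: "x \<in> P" "y = f x"
        using X cover aut_bij_betw[OF f] by (metis UnionI bij_betw_imp_surj_on imageE)
      then obtain Y where "Y \<in> Q" "x \<in> Y" using cover by blast
      then have "x \<in> X" using invariant f x \<open>y \<in> X\<close> X disjoint by blast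
      then show "y \<in> f ` X" using x by blast
    qed
  qed
  show "(\<lambda>X\<in>Q. \<lambda>x. if x \<in> X then f x else x) \<in> Pi\<^sub>E Q (aut lt)"
    using aut_restrict[OF f XP fX] by (intro PiE_I) simp_all
  show "prod_map Q (\<lambda>X\<in>Q. \<lambda>x. if x \<in> X then f x else x) = f"
  proof
    fix x
    show "prod_map Q (\<lambda>X\<in>Q. \<lambda>x. if x \<in> X then f x else x) x = f x"
      using prod_map_in prod_map_outside aut_fixes[OF f] cover by (cases "x \<in> P") auto
  qed
qed

lemma bij_betw_prod_map_aut: "bij_betw (prod_map Q) (Pi\<^sub>E Q (aut lt)) (aut lt P)"
proof -
  have "inj_on (prod_map Q) (Pi\<^sub>E Q (aut lt))"
  proof (rule inj_onI)
    fix g h assume g: "g \<in> Pi\<^sub>E Q (aut lt)" and h: "h \<in> Pi\<^sub>E Q (aut lt)"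
      and eq: "prod_map Q g = prod_map Q h"
    show "g = h"
    proof (rule PiE_ext[OF g h], rule ext)
      fix X x assume X: "X \<in> Q"
      show "g X x = h X x"
      proof (cases "x \<in> X")
        case True
        then show ?thesis using eq prod_map_in[OF X True] by metis
      next
        case False
        have "g X \<in> aut lt X" "h X \<in> aut lt X" using g h X by auto
        then show ?thesis using False by (simp add: aut_fixes)
      qed
    qed
  qed
  moreover have "prod_map Q ` Pi\<^sub>E Q (aut lt) = aut lt P"
  proof (intro equalityI subsetI)
    fix f assume "f \<in> prod_map Q ` Pi\<^sub>E Q (aut lt)"
    then obtain g where "g \<in> Pi\<^sub>E Q (aut lt)" "f = prod_map Q g" by (rule imageE)
    then show "f \<in> aut lt P" using prod_map_aut by simp
  next
    fix f assume f: "f \<in> aut lt P"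
    show "f \<in> prod_map Q ` Pi\<^sub>E Q (aut lt)"
    proof (rule image_eqI)
      show "f = prod_map Q (\<lambda>X\<in>Q. \<lambda>x. if x \<in> X then f x else x)"
        using aut_eq_prod_map_restrict(2)[OF f] by simp
    qed (rule aut_eq_prod_map_restrict(1)[OF f])
  qed
  ultimately show ?thesis unfolding bij_betw_def by (rule conjI)
qed

end

end

section \<open>Tangles of a finite (3+1)-free poset\<close>

locale free_3_1_poset =
  fixes P :: "'a set" and lt :: "'a \<Rightarrow> 'a \<Rightarrow> bool"
  assumes finite: "finite P" and strict_poset: "strict_poset P lt" and free_3_1: "free_3_1 P lt"
begin

lemma lt_trans: "\<lbrakk>x \<in> P; y \<in> P; z \<in> P; lt x y; lt y z\<rbrakk> \<Longrightarrow> lt x z"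
  using strict_poset unfolding strict_poset_def by blast

lemma no_3_1:
  "\<lbrakk>a \<in> P; b \<in> P; c \<in> P; d \<in> P; lt a b; lt b c;
    incomp lt d a; incomp lt d b; incomp lt d c\<rbrakk> \<Longrightarrow> False"
  using free_3_1 unfolding free_3_1_def by blast

lemma dual: "free_3_1_poset P lt\<inverse>\<inverse>"
proof
  show "finite P" by (rule finite)
  show "strict_poset P lt\<inverse>\<inverse>" using strict_poset unfolding strict_poset_def conversep_iff by blast
  show "free_3_1 P lt\<inverse>\<inverse>" unfolding free_3_1_def incomp_conversep
  proof (intro notI, elim bexE conjE)
    fix a b c d assume "a \<in> P" "b \<in> P" "c \<in> P" "d \<in> P" "lt\<inverse>\<inverse> a b" "lt\<inverse>\<inverse> b c"
      "incomp lt d a" "incomp lt d b" "incomp lt d c"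
    then show False using no_3_1[of c b a d] by simp
  qed
qed

lemma top_rel_iff_two_plus_two: "top_rel P lt a b \<longleftrightarrow> (\<exists>u v. two_plus_two P lt u v a b)"
proof
  assume "\<exists>u v. two_plus_two P lt u v a b"
  then obtain u v where "two_plus_two P lt u v a b" by blast
  then show "top_rel P lt a b"
    by (intro top_relI[where p = u and q = v]) (auto simp: two_plus_two_def incomp_def)
next
  assume "top_rel P lt a b"
  then obtain u v where u: "u \<in> P" "lt u a" "\<not> lt u b" and v: "v \<in> P" "lt v b" "\<not> lt v a"
    and ab: "a \<in> P" "b \<in> P"
    unfolding top_rel_def down_def by blast
  have "\<not> lt a b" "\<not> lt b a" using lt_trans u v ab by blast+
  moreover have "\<not> lt u v" "\<not> lt v u" using lt_trans u v ab by blast+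
  moreover have "\<not> lt b u" "\<not> lt a v" using lt_trans u v ab \<open>\<not> lt a b\<close> \<open>\<not> lt b a\<close> by blast+
  ultimately have "two_plus_two P lt u v a b"
    using u v ab unfolding two_plus_two_def incomp_def by auto
  then show "\<exists>u v. two_plus_two P lt u v a b" by blast
qed

lemma two_plus_two_top_rel: "two_plus_two P lt u v a b \<Longrightarrow> top_rel P lt a b"
  using top_rel_iff_two_plus_two by blast

lemma bot_rel_iff_two_plus_two: "bot_rel P lt u v \<longleftrightarrow> (\<exists>a b. two_plus_two P lt u v a b)"
proof -
  interpret dual: free_3_1_poset P "lt\<inverse>\<inverse>" by (rule dual)
  show ?thesis using dual.top_rel_iff_two_plus_two[of u v] by (simp add: two_plus_two_conversep)
qed

lemma two_plus_two_bot_rel: "two_plus_two P lt u v a b \<Longrightarrow> bot_rel P lt u v"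
  using bot_rel_iff_two_plus_two by blast

lemma two_plus_two_common_top:
  assumes uv: "two_plus_two P lt u v a b" and uv': "two_plus_two P lt u' v' a b'"
  shows "(bot_rel P lt)\<^sup>*\<^sup>* u u'"
proof -
  have P: "u \<in> P" "v \<in> P" "a \<in> P" "b \<in> P" "u' \<in> P" "v' \<in> P" "b' \<in> P"
    using uv uv' unfolding two_plus_two_def by auto
  have lt: "lt u a" "lt v b" "\<not> lt v a" "\<not> lt u b" "lt u' a" "lt v' b'" "\<not> lt v' a" "\<not> lt u' b'"
    using uv uv' unfolding two_plus_two_def incomp_def by auto
  consider "\<not> lt u b'" | "\<not> lt u' b" | "lt u b'" "lt u' b" by blast
  then show ?thesis
  proof cases
    case 1
    then have "bot_rel P lt u v'" using bot_relI[where x = u and y = v' and p = a and q = b'] P lt by blast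
    moreover have "bot_rel P lt v' u'" using two_plus_two_bot_rel[OF uv'] symp_bot_rel by (metis sympD)
    ultimately show ?thesis by (meson converse_rtranclp_into_rtranclp r_into_rtranclp)
  next
    case 2
    then have "bot_rel P lt u v" using two_plus_two_bot_rel[OF uv] by blast
    moreover have "bot_rel P lt v u'"
      using 2 bot_relI[where x = u' and y = v and p = a and q = b] P lt symp_bot_rel by (metis sympD)
    ultimately show ?thesis by (meson converse_rtranclp_into_rtranclp r_into_rtranclp)
  next
    case 3
    then have "bot_rel P lt u u'" using bot_relI[where x = u and y = u' and p = b' and q = b] P lt by blast
    then show ?thesis by blast
  qed
qed

text \<open>This is what makes tops and bottoms match up.\<close>

lemma top_connected_two_plus_two_bot_connected:
  assumes "(top_rel P lt)\<^sup>*\<^sup>* a a'" and uv: "two_plus_two P lt u v a b"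
  shows "two_plus_two P lt u' v' a' b' \<Longrightarrow> (bot_rel P lt)\<^sup>*\<^sup>* u u'"
  using assms(1)
proof (induction arbitrary: u' v' b' rule: rtranclp_induct)
  case base
  then show ?case using two_plus_two_common_top[OF uv] by blast
next
  case (step y z)
  obtain p q where pq: "two_plus_two P lt p q y z"
    using step.hyps(2) top_rel_iff_two_plus_two by blast
  have "(bot_rel P lt)\<^sup>*\<^sup>* u p" by (rule step.IH[OF pq])
  moreover have "bot_rel P lt p q" by (rule two_plus_two_bot_rel[OF pq])
  moreover have "(bot_rel P lt)\<^sup>*\<^sup>* q u'"
    using two_plus_two_common_top[OF two_plus_two_commute[THEN iffD1, OF pq] step.prems] .
  ultimately show ?case by (meson rtranclp.rtrancl_into_rtrancl rtranclp_trans)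
qed

lemma not_two_plus_two_top_and_bottom:
  assumes uv: "two_plus_two P lt u v x y" and wpq: "two_plus_two P lt x w p q"
  shows False
proof -
  have f: "u \<in> P" "v \<in> P" "x \<in> P" "y \<in> P" "lt u x" "lt v y" "incomp lt x y" "incomp lt u v"
    "incomp lt u y" "incomp lt v x"
    using uv unfolding two_plus_two_def by auto
  have g: "w \<in> P" "p \<in> P" "q \<in> P" "lt x p" "lt w q" "incomp lt p q" "incomp lt x w"
    "incomp lt x q" "incomp lt w p"
    using wpq unfolding two_plus_two_def by auto
  have yp: "lt y p"
  proof (rule ccontr)
    assume "\<not> lt y p"
    then have "incomp lt y p" using f g lt_trans[of x p y] by (auto simp: incomp_def)
    then show False using no_3_1[of u x p y] f g by (auto simp: incomp_def)
  qed
  have uw: "lt u w"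
  proof (rule ccontr)
    assume "\<not> lt u w"
    then have "incomp lt w u" using f g lt_trans[of w u x] by (auto simp: incomp_def)
    then show False using no_3_1[of u x p w] f g by (auto simp: incomp_def)
  qed
  have yq: "lt y q"
  proof (rule ccontr)
    assume n: "\<not> lt y q"
    have "lt u q" using lt_trans[of u w q] uw f g by auto
    then have "incomp lt y q" using n f g yp lt_trans[of u q y] by (auto simp: incomp_def)
    moreover have "incomp lt y w"
      using n f g yp lt_trans[of y w q] lt_trans[of w y p] by (auto simp: incomp_def)
    ultimately show False using no_3_1[of u w q y] f g uw by (auto simp: incomp_def)
  qed
  show False using no_3_1[of v y q x] f g yq by (auto simp: incomp_def)
qed

lemma two_plus_two_top_not_in_bottom:
  assumes uv: "two_plus_two P lt u v a b" and B: "B \<in> bottoms P lt"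
  shows "a \<notin> B"
proof
  assume "a \<in> B"
  then obtain c p q where "two_plus_two P lt a c p q"
    using bottom_has_edge[OF B] bot_rel_iff_two_plus_two by blast
  with uv show False by (rule not_two_plus_two_top_and_bottom)
qed

lemma top_bottom_disjoint:
  assumes A: "A \<in> tops P lt" and B: "B \<in> bottoms P lt"
  shows "A \<inter> B = {}"
proof (rule equals0I)
  fix x assume "x \<in> A \<inter> B"
  then obtain c u v where "two_plus_two P lt u v x c" "x \<in> B"
    using top_has_edge[OF A] top_rel_iff_two_plus_two by blast
  then show False using two_plus_two_top_not_in_bottom[OF _ B] by blast
qed

lemma two_plus_two_tangle:
  assumes uv: "two_plus_two P lt u v a b"
  obtains A B where "A \<in> tops P lt" "B \<in> bottoms P lt" "matched lt A B"
    "a \<in> A" "b \<in> A" "u \<in> B" "v \<in> B"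
proof
  have P: "u \<in> P" "v \<in> P" "a \<in> P" "b \<in> P" "a \<noteq> b" "u \<noteq> v"
    using uv unfolding two_plus_two_def incomp_def by auto
  show A: "component P (top_rel P lt) a \<in> tops P lt"
    and a: "a \<in> component P (top_rel P lt) a" and b: "b \<in> component P (top_rel P lt) a"
    using nontrivial_componentI[where E = "top_rel P lt", OF symp_top_rel finite]
      two_plus_two_top_rel[OF uv] P unfolding tops_eq by blast+
  show B: "component P (bot_rel P lt) u \<in> bottoms P lt"
    and u: "u \<in> component P (bot_rel P lt) u" and v: "v \<in> component P (bot_rel P lt) u"
    using nontrivial_componentI[where E = "bot_rel P lt", OF symp_bot_rel finite]
      two_plus_two_bot_rel[OF uv] P unfolding bottoms_eq by blast+
  show "matched lt (component P (top_rel P lt) a) (component P (bot_rel P lt) u)"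
    using matched_iff_two_plus_two[OF top_subset[OF A] bottom_subset[OF B]] a b u v uv by blast
qed

lemma matched_two_plus_two_bottom:
  assumes A: "A \<in> tops P lt" and B: "B \<in> bottoms P lt" and "matched lt A B"
    and uv: "two_plus_two P lt u v a b" and "a \<in> A"
  shows "u \<in> B"
proof -
  obtain a1 a2 b1 b2 where s: "two_plus_two P lt b1 b2 a1 a2" "a1 \<in> A" "b1 \<in> B"
    using assms(3) unfolding matched_iff_two_plus_two[OF top_subset[OF A] bottom_subset[OF B]] by blast
  have "(top_rel P lt)\<^sup>*\<^sup>* a1 a" using top_connected[OF A s(2) \<open>a \<in> A\<close>] .
  then have "(bot_rel P lt)\<^sup>*\<^sup>* b1 u"
    using s(1) uv by (rule top_connected_two_plus_two_bot_connected)
  then show ?thesis using bottom_closed[OF B s(3)] two_plus_two_in_P[OF uv] by blast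
qed

lemma matched_two_plus_two_top:
  assumes "A \<in> tops P lt" "B \<in> bottoms P lt" "matched lt A B"
    and "two_plus_two P lt u v a b" "u \<in> B"
  shows "a \<in> A"
proof -
  interpret dual: free_3_1_poset P "lt\<inverse>\<inverse>" by (rule dual)
  show ?thesis
    using dual.matched_two_plus_two_bottom[of B A a b u v] assms
    by (simp add: matched_conversep two_plus_two_conversep)
qed

lemma matched_unique_bottom:
  assumes A: "A \<in> tops P lt" and B: "B \<in> bottoms P lt" "B' \<in> bottoms P lt"
    and "matched lt A B" "matched lt A B'"
  shows "B = B'"
proof -
  obtain u v a b where uv: "two_plus_two P lt u v a b" "a \<in> A" "u \<in> B'"
    using assms(5) unfolding matched_iff_two_plus_two[OF top_subset[OF A] bottom_subset[OF B(2)]] by blast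
  then have "u \<in> B" using matched_two_plus_two_bottom[OF A B(1) assms(4)] by blast
  then show ?thesis using bottoms_eq_if_meet[OF B] uv(3) by blast
qed

lemma matched_unique_top:
  assumes "A \<in> tops P lt" "A' \<in> tops P lt" "B \<in> bottoms P lt"
    and "matched lt A B" "matched lt A' B"
  shows "A = A'"
proof -
  interpret dual: free_3_1_poset P "lt\<inverse>\<inverse>" by (rule dual)
  show ?thesis
    using dual.matched_unique_bottom[of B A A'] assms by (simp add: matched_conversep)
qed

lemma tangleE:
  assumes "T \<in> tangles P lt"
  obtains A B where "T = A \<union> B" "A \<in> tops P lt" "B \<in> bottoms P lt" "matched lt A B"
  using assms unfolding tangles_def by blast

lemma tangle_subset: "T \<in> tangles P lt \<Longrightarrow> T \<subseteq> P"
  by (erule tangleE) (use top_subset bottom_subset in blast)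

lemma tangles_eq_if_meet:
  assumes T1: "T1 \<in> tangles P lt" and T2: "T2 \<in> tangles P lt" and x: "x \<in> T1" "x \<in> T2"
  shows "T1 = T2"
proof -
  obtain A1 B1 where 1: "T1 = A1 \<union> B1" "A1 \<in> tops P lt" "B1 \<in> bottoms P lt" "matched lt A1 B1"
    using T1 by (rule tangleE)
  obtain A2 B2 where 2: "T2 = A2 \<union> B2" "A2 \<in> tops P lt" "B2 \<in> bottoms P lt" "matched lt A2 B2"
    using T2 by (rule tangleE)
  have "x \<in> A1 \<and> x \<in> A2 \<or> x \<in> B1 \<and> x \<in> B2"
    using x 1 2 top_bottom_disjoint[OF 1(2) 2(3)] top_bottom_disjoint[OF 2(2) 1(3)] by blast
  then have "A1 = A2 \<or> B1 = B2"
    using tops_eq_if_meet[OF 1(2) 2(2)] bottoms_eq_if_meet[OF 1(3) 2(3)] by blast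
  then have "A1 = A2 \<and> B1 = B2"
    using matched_unique_bottom[OF 1(2,3) 2(3) 1(4)] matched_unique_top[OF 1(2) 2(2) 1(3) 1(4)] 2(4)
    by auto
  then show ?thesis using 1(1) 2(1) by simp
qed

lemma mem_Union_tangles_iff: "x \<in> \<Union>(tangles P lt) \<longleftrightarrow> (\<exists>y. top_rel P lt x y \<or> bot_rel P lt x y)"
proof
  assume "x \<in> \<Union>(tangles P lt)"
  then obtain T where "T \<in> tangles P lt" "x \<in> T" by blast
  then show "\<exists>y. top_rel P lt x y \<or> bot_rel P lt x y"
    using top_has_edge bottom_has_edge by (metis UnE tangleE)
next
  assume "\<exists>y. top_rel P lt x y \<or> bot_rel P lt x y"
  then obtain u v a b where uv: "two_plus_two P lt u v a b" and "x = a \<or> x = u"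
    using top_rel_iff_two_plus_two bot_rel_iff_two_plus_two by blast
  moreover obtain A B where "A \<in> tops P lt" "B \<in> bottoms P lt" "matched lt A B"
    "a \<in> A" "u \<in> B"
    using two_plus_two_tangle[OF uv] by blast
  ultimately show "x \<in> \<Union>(tangles P lt)" unfolding tangles_def by blast
qed

lemma two_plus_two_up_subset:
  assumes uv: "two_plus_two P lt u v a b"
  shows "up P lt a \<subseteq> up P lt b"
proof
  fix z assume "z \<in> up P lt a"
  then have z: "z \<in> P" "lt a z" unfolding up_def by auto
  have f: "u \<in> P" "a \<in> P" "b \<in> P" "lt u a" "incomp lt b u" "incomp lt b a"
    using uv unfolding two_plus_two_def incomp_def by auto
  have "lt b z"
  proof (rule ccontr)
    assume "\<not> lt b z"
    then have "incomp lt b z" using z f lt_trans[of a z b] unfolding incomp_def by auto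
    then show False using no_3_1[of u a z b] f z by blast
  qed
  then show "z \<in> up P lt b" using z unfolding up_def by simp
qed

lemma two_plus_two_up_eq: "two_plus_two P lt u v a b \<Longrightarrow> up P lt a = up P lt b"
  using two_plus_two_up_subset two_plus_two_commute by (metis subset_antisym)

lemma top_up_eq:
  assumes A: "A \<in> tops P lt" and "a \<in> A" "a' \<in> A"
  shows "up P lt a = up P lt a'"
  using top_connected[OF assms]
proof (induction rule: rtranclp_induct)
  case (step y z)
  then show ?case using top_rel_iff_two_plus_two two_plus_two_up_eq by metis
qed simp

lemma bot_rel_up_diff_top_subset:
  assumes A: "A \<in> tops P lt" and B: "B \<in> bottoms P lt" and "matched lt A B"
    and "y \<in> B" "bot_rel P lt y w"
  shows "up P lt y - A \<subseteq> up P lt w - A"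
proof
  obtain p q where pq: "two_plus_two P lt y w p q"
    using assms(5) bot_rel_iff_two_plus_two by blast
  have "p \<in> A" by (rule matched_two_plus_two_top[OF A B assms(3) pq \<open>y \<in> B\<close>])
  then have "q \<in> A" using top_closed_edge[OF A _ two_plus_two_top_rel[OF pq]] by blast
  have f: "y \<in> P" "w \<in> P" "q \<in> P" "\<not> lt y q" "lt w q"
    using pq unfolding two_plus_two_def incomp_def by auto
  fix z assume "z \<in> up P lt y - A"
  then have z: "z \<in> P" "lt y z" "z \<notin> A" unfolding up_def by auto
  have "lt w z"
  proof (rule ccontr)
    assume "\<not> lt w z"
    then have "top_rel P lt q z" using top_relI[where p = w and q = y] f z by blast
    then show False using top_closed_edge[OF A \<open>q \<in> A\<close>] z(3) by blast
  qed
  then show "z \<in> up P lt w - A" using z unfolding up_def by simp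
qed

text \<open>Elements of B need not have the same up-set, as parts of A may lie above them.\<close>

lemma bottom_up_diff_top_eq:
  assumes A: "A \<in> tops P lt" and B: "B \<in> bottoms P lt" and "matched lt A B"
    and "b \<in> B" "b' \<in> B"
  shows "up P lt b - A = up P lt b' - A"
  using bottom_connected[OF B assms(4,5)]
proof (induction rule: rtranclp_induct)
  case (step y z)
  have "y \<in> B" "z \<in> B"
    using bottom_closed[OF B assms(4) step.hyps(1)] bottom_closed_edge[OF B _ step.hyps(2)]
      step.hyps(2) unfolding bot_rel_def by blast+
  moreover have "bot_rel P lt z y" using step.hyps(2) symp_bot_rel by (metis sympD)
  ultimately have "up P lt y - A = up P lt z - A"
    using bot_rel_up_diff_top_subset[OF A B assms(3)] step.hyps(2) by (meson subset_antisym)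
  then show ?case using step.IH by simp
qed simp

lemma aut_tangle_top:
  assumes A: "A \<in> tops P lt" and B: "B \<in> bottoms P lt" and "matched lt A B"
    and g: "g \<in> aut lt (A \<union> B)" and "x \<in> A"
  shows "g x \<in> A"
proof -
  obtain c u v where uv: "two_plus_two P lt u v x c"
    using top_has_edge[OF A \<open>x \<in> A\<close>] top_rel_iff_two_plus_two by blast
  have "c \<in> A" using top_closed_edge[OF A \<open>x \<in> A\<close> two_plus_two_top_rel[OF uv]] .
  moreover have "u \<in> B" by (rule matched_two_plus_two_bottom[OF A B assms(3) uv \<open>x \<in> A\<close>])
  moreover have "v \<in> B" using bottom_closed_edge[OF B \<open>u \<in> B\<close> two_plus_two_bot_rel[OF uv]] .
  moreover have "A \<union> B \<subseteq> P" using top_subset[OF A] bottom_subset[OF B] by blast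
  ultimately have "two_plus_two P lt (g u) (g v) (g x) (g c)"
    using aut_two_plus_two[OF g _ uv] \<open>x \<in> A\<close> by blast
  then have "g x \<notin> B" using two_plus_two_top_not_in_bottom[OF _ B] by blast
  moreover have "g x \<in> A \<union> B" using aut_in[OF g] \<open>x \<in> A\<close> by blast
  ultimately show ?thesis by blast
qed

lemma bottom_down_eq:
  assumes "B \<in> bottoms P lt" "b \<in> B" "b' \<in> B"
  shows "down P lt b = down P lt b'"
proof -
  interpret dual: free_3_1_poset P "lt\<inverse>\<inverse>" by (rule dual)
  show ?thesis using dual.top_up_eq[of B b b'] assms by simp
qed

lemma top_down_diff_bottom_eq:
  assumes "A \<in> tops P lt" "B \<in> bottoms P lt" "matched lt A B" "a \<in> A" "a' \<in> A"
  shows "down P lt a - B = down P lt a' - B"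
proof -
  interpret dual: free_3_1_poset P "lt\<inverse>\<inverse>" by (rule dual)
  show ?thesis using dual.bottom_up_diff_top_eq[of B A a a'] assms by (simp add: matched_conversep)
qed

lemma aut_tangle_bottom:
  assumes "A \<in> tops P lt" "B \<in> bottoms P lt" "matched lt A B" "g \<in> aut lt (A \<union> B)" "x \<in> B"
  shows "g x \<in> B"
proof -
  interpret dual: free_3_1_poset P "lt\<inverse>\<inverse>" by (rule dual)
  show ?thesis
    using dual.aut_tangle_top[of B A g x] assms by (simp add: matched_conversep Un_commute)
qed

lemma aut_tangle_extends:
  assumes "T \<in> tangles P lt"
  shows "aut lt T \<subseteq> aut lt P"
proof
  fix g assume g: "g \<in> aut lt T"
  obtain A B where T: "T = A \<union> B" and AB: "A \<in> tops P lt" "B \<in> bottoms P lt" "matched lt A B"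
    using assms by (rule tangleE)
  show "g \<in> aut lt P"
  proof (rule aut_extends[OF tangle_subset[OF assms] g])
    fix x assume "x \<in> T"
    then consider "x \<in> A" "g x \<in> A" | "x \<in> B" "g x \<in> B"
      using aut_tangle_top[OF AB] aut_tangle_bottom[OF AB] g T by blast
    then have "up P lt (g x) - (A \<union> B) = up P lt x - (A \<union> B) \<and>
        down P lt (g x) - (A \<union> B) = down P lt x - (A \<union> B)"
    proof cases
      case 1
      have "up P lt (g x) = up P lt x" using top_up_eq[OF AB(1) 1(2,1)] .
      moreover have "down P lt (g x) - B = down P lt x - B"
        using top_down_diff_bottom_eq[OF AB 1(2,1)] .
      ultimately show ?thesis by blast
    next
      case 2
      have "down P lt (g x) = down P lt x" using bottom_down_eq[OF AB(2) 2(2,1)] .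
      moreover have "up P lt (g x) - A = up P lt x - A"
        using bottom_up_diff_top_eq[OF AB 2(2,1)] .
      ultimately show ?thesis by blast
    qed
    then show "up P lt (g x) - T = up P lt x - T" "down P lt (g x) - T = down P lt x - T"
      unfolding T by simp_all
  qed
qed

lemma clone_setE:
  assumes "C \<in> clone_sets P lt"
  obtains x where "x \<in> P" "x \<notin> \<Union>(tangles P lt)"
    "C = {y \<in> P - \<Union>(tangles P lt). down P lt y = down P lt x \<and> up P lt y = up P lt x}"
  using assms unfolding clone_sets_def Let_def by blast

lemma aut_clone_extends:
  assumes "C \<in> clone_sets P lt"
  shows "aut lt C \<subseteq> aut lt P"
proof
  fix g assume g: "g \<in> aut lt C"
  obtain x0 where C: "C = {y \<in> P - \<Union>(tangles P lt). down P lt y = down P lt x0 \<and> up P lt y = up P lt x0}"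
    using assms by (rule clone_setE)
  have "down P lt (g x) = down P lt x \<and> up P lt (g x) = up P lt x" if "x \<in> C" for x
    using aut_in[OF g that] that unfolding C by simp
  then show "g \<in> aut lt P" using C by (intro aut_extends[OF _ g]) auto
qed

lemma aut_down_eq_or_top_rel:
  assumes f: "f \<in> aut lt P" and x: "x \<in> P"
  shows "down P lt (f x) = down P lt x \<or> top_rel P lt x (f x)"
proof (rule disjCI)
  assume "\<not> top_rel P lt x (f x)"
  then have "down P lt x \<subseteq> down P lt (f x) \<or> down P lt (f x) \<subseteq> down P lt x"
    using x aut_in[OF f x] unfolding top_rel_def by blast
  moreover have "finite (down P lt x)" "finite (down P lt (f x))"
    using finite unfolding down_def by simp_all
  moreover have "card (down P lt (f x)) = card (down P lt x)"
  proof -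
    have "inj_on f (down P lt x)"
      using aut_bij_betw[OF f] unfolding bij_betw_def down_def by (auto intro: inj_on_subset)
    then show ?thesis unfolding aut_image_down[OF f x] by (rule card_image)
  qed
  ultimately show "down P lt (f x) = down P lt x" using card_subset_eq by metis
qed

lemma aut_top_invariant:
  assumes A: "A \<in> tops P lt" and f: "f \<in> aut lt P" and "x \<in> A"
  shows "f x \<in> A"
proof -
  have x: "x \<in> P" using top_subset[OF A] \<open>x \<in> A\<close> by blast
  consider "top_rel P lt x (f x)" | "down P lt (f x) = down P lt x"
    using aut_down_eq_or_top_rel[OF f x] by blast
  then show ?thesis
  proof cases
    case 1
    then show ?thesis using top_closed_edge[OF A \<open>x \<in> A\<close>] by blast
  next
    case 2
    obtain c where c: "top_rel P lt x c" using top_has_edge[OF A \<open>x \<in> A\<close>] by blast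
    then have "top_rel P lt (f x) c" using top_rel_cong_down[OF 2 aut_in[OF f x] x] by simp
    then have "top_rel P lt c (f x)" using symp_top_rel by (metis sympD)
    then show ?thesis using top_closed_edge[OF A top_closed_edge[OF A \<open>x \<in> A\<close> c]] by blast
  qed
qed

lemma aut_bottom_invariant:
  assumes "B \<in> bottoms P lt" "f \<in> aut lt P" "x \<in> B"
  shows "f x \<in> B"
proof -
  interpret dual: free_3_1_poset P "lt\<inverse>\<inverse>" by (rule dual)
  show ?thesis using dual.aut_top_invariant[of B f x] assms by simp
qed

lemma aut_up_eq_or_bot_rel:
  assumes "f \<in> aut lt P" "x \<in> P"
  shows "up P lt (f x) = up P lt x \<or> bot_rel P lt x (f x)"
proof -
  interpret dual: free_3_1_poset P "lt\<inverse>\<inverse>" by (rule dual)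
  show ?thesis using dual.aut_down_eq_or_top_rel[of f x] assms by simp
qed

lemma aut_part_invariant:
  assumes X: "X \<in> parts P lt" and f: "f \<in> aut lt P"
  shows "f ` X \<subseteq> X"
proof (cases "X \<in> tangles P lt")
  case True
  then obtain A B where "X = A \<union> B" "A \<in> tops P lt" "B \<in> bottoms P lt"
    by (rule tangleE)
  then show ?thesis using aut_top_invariant[OF _ f] aut_bottom_invariant[OF _ f] by blast
next
  case False
  then obtain x0 where x0: "X = {y \<in> P - \<Union>(tangles P lt). down P lt y = down P lt x0 \<and> up P lt y = up P lt x0}"
    using X unfolding parts_def by (auto elim: clone_setE)
  show ?thesis
  proof
    fix y assume "y \<in> f ` X"
    then obtain x where "x \<in> X" "y = f x" by blast
    then have x: "x \<in> P" "x \<notin> \<Union>(tangles P lt)" and y: "y \<in> P" using x0 aut_in[OF f] by auto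
    then have no_edge: "\<not> top_rel P lt x c" "\<not> bot_rel P lt x c" for c
      using mem_Union_tangles_iff by blast+
    have "down P lt y = down P lt x" "up P lt y = up P lt x"
      using aut_down_eq_or_top_rel[OF f x(1)] aut_up_eq_or_bot_rel[OF f x(1)] no_edge \<open>y = f x\<close>
      by blast+
    moreover have "y \<notin> \<Union>(tangles P lt)"
      using mem_Union_tangles_iff no_edge top_rel_cong_down[OF calculation(1) y x(1)]
        bot_rel_cong_up[OF calculation(2) y x(1)] by blast
    ultimately show "y \<in> X" using \<open>x \<in> X\<close> y unfolding x0 by simp
  qed
qed

lemma parts_disjoint: "\<forall>X\<in>parts P lt. \<forall>Y\<in>parts P lt. X \<noteq> Y \<longrightarrow> X \<inter> Y = {}"
proof (intro ballI impI)
  fix X Y assume X: "X \<in> parts P lt" and Y: "Y \<in> parts P lt" and "X \<noteq> Y"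
  have clone: "C \<inter> \<Union>(tangles P lt) = {}" if "C \<in> clone_sets P lt" for C
    using that by (auto elim: clone_setE)
  show "X \<inter> Y = {}"
  proof (rule equals0I)
    fix z assume z: "z \<in> X \<inter> Y"
    consider "X \<in> tangles P lt" "Y \<in> tangles P lt" | "X \<in> clone_sets P lt" "Y \<in> clone_sets P lt"
      using X Y z clone unfolding parts_def by blast
    then show False
    proof cases
      case 1
      then show False using tangles_eq_if_meet z \<open>X \<noteq> Y\<close> by blast
    next
      case 2
      obtain x where x: "X = {y \<in> P - \<Union>(tangles P lt). down P lt y = down P lt x \<and> up P lt y = up P lt x}"
        using 2(1) by (rule clone_setE)
      obtain y where y: "Y = {w \<in> P - \<Union>(tangles P lt). down P lt w = down P lt y \<and> up P lt w = up P lt y}"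
        using 2(2) by (rule clone_setE)
      have "X = Y" using z unfolding x y by auto
      then show False using \<open>X \<noteq> Y\<close> by blast
    qed
  qed
qed

lemma Union_parts: "\<Union>(parts P lt) = P"
proof
  show "\<Union>(parts P lt) \<subseteq> P"
    unfolding parts_def using tangle_subset by (auto elim: clone_setE)
  show "P \<subseteq> \<Union>(parts P lt)"
  proof
    fix x assume "x \<in> P"
    show "x \<in> \<Union>(parts P lt)"
    proof (cases "x \<in> \<Union>(tangles P lt)")
      case False
      then have "{y \<in> P - \<Union>(tangles P lt). down P lt y = down P lt x \<and> up P lt y = up P lt x}
          \<in> clone_sets P lt"
        unfolding clone_sets_def Let_def using \<open>x \<in> P\<close> by blast
      then show ?thesis unfolding parts_def using \<open>x \<in> P\<close> False by blast
    qed (auto simp: parts_def)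
  qed
qed

lemma aut_part_extends: "X \<in> parts P lt \<Longrightarrow> aut lt X \<subseteq> aut lt P"
  unfolding parts_def using aut_tangle_extends aut_clone_extends by blast

end

theorem theorem2p14:
  fixes P :: "'a set" and lt :: "'a \<Rightarrow> 'a \<Rightarrow> bool"
  assumes "finite P" and "strict_poset P lt" and "free_3_1 P lt"
  shows "(\<forall>X\<in>parts P lt. \<forall>Y\<in>parts P lt. X \<noteq> Y \<longrightarrow> X \<inter> Y = {}) \<and>
         \<Union>(parts P lt) = P \<and>
         (\<forall>X\<in>parts P lt. aut lt X \<subseteq> aut lt P) \<and>
         bij_betw (prod_map (parts P lt)) (Pi\<^sub>E (parts P lt) (aut lt)) (aut lt P) \<and>
         (\<forall>g\<in>Pi\<^sub>E (parts P lt) (aut lt). \<forall>h\<in>Pi\<^sub>E (parts P lt) (aut lt).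
            prod_map (parts P lt) (\<lambda>X\<in>parts P lt. g X \<circ> h X) =
            prod_map (parts P lt) g \<circ> prod_map (parts P lt) h)"
proof -
  interpret free_3_1_poset P lt using assms by unfold_locales
  have extends: "\<forall>X\<in>parts P lt. aut lt X \<subseteq> aut lt P"
    using aut_part_extends by blast
  have invariant: "\<forall>f\<in>aut lt P. \<forall>X\<in>parts P lt. f ` X \<subseteq> X"
    using aut_part_invariant by blast
  show ?thesis
    using parts_disjoint Union_parts extends
      bij_betw_prod_map_aut[OF parts_disjoint Union_parts extends invariant]
      prod_map_comp[OF parts_disjoint]
    by (intro conjI ballI) simp_all
qed

end
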